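(* Let $Z\subseteq\Sigma^{\mathbb Z}$ be a sofic shift, $\tilde f:\mathbb R^n\times\Sigma\to\mathbb R^n$, and consider the switched system $x(k+1)=\tilde f(x(k),z_k)$ driven by $\bar z\in Z$ (i.e. $f(x,\bar z)=\tilde f(x,z_0)$). Let $(C_1,\dots,C_K)$ be any graph-induced covering of $Z$ and $\mathcal G$ any presentation of it. The system is globally uniformly asymptotically stable if and only if there exists a $\mathcal G$-based Lyapunov function for it.
   Context: $\Sigma$ nonempty countable alphabet; $\Sigma^{\mathbb Z}$ bi-infinite sequences $\bar z=(z_k)_{k\in\mathbb Z}$; $\sigma(\bar z)_k=z_{k+1}$. A labeled graph is $\mathcal G=(S,E)$, $S$ finite, $E\subseteq S\times S\times\Sigma$; standing assumption: every node has at least one incoming and one outgoing edge. A bi-infinite walk labeled by $\bar z$ is $(e_k)_{k\in\mathbb Z}$ with $e_k=(s_k,s_{k+1},z_k)\in E$, starting at $s_0$. $\mathcal Z(\mathcal G)$ / $\mathcal Z(\mathcal G,s)$: labels of all bi-infinite walks / those starting at $s$. Sofic shift: a set $\mathcal Z(\mathcal G)$. Graph-induced covering of $Z$ with presentation $\mathcal G$: a family $(C_1,\dots,C_K)$ with $\mathcal G$ having nodes $s_1,\dots,s_K$, $\mathcal Z(\mathcal G)=Z$ and $C_j=\mathcal Z(\mathcal G,s_j)$. $\Phi(k,x_0,\bar z)$ is the solution at time $k$ with $x(0)=x_0$. Class $\mathcal K_\infty$ and $\mathcal{KL}$ as usual. GUAS: there is $\beta\in\mathcal{KL}$ with $|\Phi(k,x_0,\bar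 z)|\le\beta(|x_0|,k)$ for all $k\in\mathbb N,x_0\in\mathbb R^n,\bar z\in Z$. A $\mathcal G$-based Lyapunov function is $W:\mathbb R^n\times\{1,\dots,K\}\to\mathbb R$ such that there are $\alpha_1,\alpha_2\in\mathcal K_\infty$, $\gamma\in[0,1)$ with $\alpha_1(|x|)\le W(x,j)\le\alpha_2(|x|)$ for all $x,j$ and $W(f(x,\bar z),l)\le\gamma W(x,j)$ for all $x$, all edges $(s_j,s_l,i)\in E$ and all $\bar z\in C_j$ with $z_0=i$, $\sigma(\bar z)\in C_l$ (for switched systems: $W(\tilde f(x,i),l)\le\gamma W(x,j)$ for every edge $(s_j,s_l,i)\in E$). *)

theory Defs
  imports "HOL-Analysis.Analysis" "HOL-Library.Countable"
begin

text \<open>Labeled graphs: nodes are 0,...,K-1 (node s_j is j-1), edges are triples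
  (source, target, label).\<close>

definition labeled_graph :: "nat \<Rightarrow> (nat \<times> nat \<times> 'a) set \<Rightarrow> bool" where
  "labeled_graph K E \<longleftrightarrow>
     (\<forall>(j, l, i) \<in> E. j < K \<and> l < K) \<and>
     (\<forall>j<K. (\<exists>l i. (j, l, i) \<in> E) \<and> (\<exists>l i. (l, j, i) \<in> E))"

definition walk_labels_from :: "(nat \<times> nat \<times> 'a) set \<Rightarrow> nat \<Rightarrow> (int \<Rightarrow> 'a) set" where
  "walk_labels_from E s0 =
     {z. \<exists>s::int \<Rightarrow> nat. s 0 = s0 \<and> (\<forall>k. (s k, s (k + 1), z k) \<in> E)}"

definition walk_labels :: "(nat \<times> nat \<times> 'a) set \<Rightarrow> (int \<Rightarrow> 'a) set" where
  "walk_labels E = {z. \<exists>s::int \<Rightarrow> nat. \<forall>k. (s k, s (k + 1), z k) \<in> E}"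

fun sw_sol :: "('x \<Rightarrow> 'a \<Rightarrow> 'x) \<Rightarrow> nat \<Rightarrow> 'x \<Rightarrow> (int \<Rightarrow> 'a) \<Rightarrow> 'x" where
  "sw_sol ft 0 x0 z = x0"
| "sw_sol ft (Suc k) x0 z = ft (sw_sol ft k x0 z) (z (int k))"

definition class_K :: "(real \<Rightarrow> real) \<Rightarrow> bool" where
  "class_K \<alpha> \<longleftrightarrow> continuous_on {0..} \<alpha> \<and> strict_mono_on {0..} \<alpha> \<and> \<alpha> 0 = 0"

definition class_K_inf :: "(real \<Rightarrow> real) \<Rightarrow> bool" where
  "class_K_inf \<alpha> \<longleftrightarrow> class_K \<alpha> \<and> filterlim \<alpha> at_top at_top"

definition class_KL :: "(real \<Rightarrow> real \<Rightarrow> real) \<Rightarrow> bool" where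
  "class_KL \<beta> \<longleftrightarrow>
     (\<forall>t\<ge>0. class_K (\<lambda>r. \<beta> r t)) \<and>
     (\<forall>r\<ge>0. antimono_on {0..} (\<lambda>t. \<beta> r t) \<and> ((\<lambda>t. \<beta> r t) \<longlongrightarrow> 0) at_top)"

definition GUAS_sw :: "('x::real_normed_vector \<Rightarrow> 'a \<Rightarrow> 'x) \<Rightarrow> (int \<Rightarrow> 'a) set \<Rightarrow> bool" where
  "GUAS_sw ft Z \<longleftrightarrow> (\<exists>\<beta>. class_KL \<beta> \<and>
     (\<forall>k x0. \<forall>z\<in>Z. norm (sw_sol ft k x0 z) \<le> \<beta> (norm x0) (real k)))"

definition graph_lyapunov_sw ::
  "('x::real_normed_vector \<Rightarrow> 'a \<Rightarrow> 'x) \<Rightarrow> nat \<Rightarrow> (nat \<times> nat \<times> 'a) set \<Rightarrow> ('x \<Rightarrow> nat \<Rightarrow> real) \<Rightarrow> bool" where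
  "graph_lyapunov_sw ft K E W \<longleftrightarrow>
     (\<exists>\<alpha>1 \<alpha>2 \<gamma>. class_K_inf \<alpha>1 \<and> class_K_inf \<alpha>2 \<and> 0 \<le> \<gamma> \<and> \<gamma> < 1 \<and>
        (\<forall>x. \<forall>j<K. \<alpha>1 (norm x) \<le> W x j \<and> W x j \<le> \<alpha>2 (norm x)) \<and>
        (\<forall>x. \<forall>(j, l, i) \<in> E. W (ft x i) l \<le> \<gamma> * W x j))"

end

theory Submission
  imports Defs
begin

text \<open>
  If W is a graph-based Lyapunov function, then along any walk the value of W contracts by the
  factor gamma at every step, so alpha1 |x(k)| \<le> gamma^k alpha2 |x(0)|, and inverting alpha1
  gives a KL bound.

  Conversely, a KL bound beta admits class K-infinity functions alpha1, alpha2 with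
  2^k alpha1 (beta r k) \<le> alpha2 r, a discrete form of Sontag's KL-lemma: alpha1 is made so
  flat near 0 that it absorbs the factor 2^k while beta r k decays. Then
  W x j = sup {2^k alpha1 |x(k)| : k \<in> \<nat>, x(0) = x, x driven by the labels of a one-sided
  walk from node j}
  lies between alpha1 |x| (take k = 0) and alpha2 |x|, and since prepending an edge (j, l, i) to a
  walk from l yields a walk from j and shifts time by one, W (f x i) l \<le> W x j / 2.
\<close>

section \<open>Class K functions\<close>

lemma class_K_less: "class_K a \<Longrightarrow> 0 \<le> x \<Longrightarrow> x < y \<Longrightarrow> a x < a y"
  unfolding class_K_def by (auto intro: strict_mono_onD)

lemma class_K_le: "class_K a \<Longrightarrow> 0 \<le> x \<Longrightarrow> x \<le> y \<Longrightarrow> a x \<le> a y"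
  by (metis class_K_less order_le_less)

lemma class_K_le_iff: "class_K a \<Longrightarrow> 0 \<le> x \<Longrightarrow> 0 \<le> y \<Longrightarrow> a x \<le> a y \<longleftrightarrow> x \<le> y"
  by (meson class_K_le class_K_less not_le)

lemma class_K_zero: "class_K a \<Longrightarrow> a 0 = 0"
  unfolding class_K_def by auto

lemma class_K_nonneg: "class_K a \<Longrightarrow> 0 \<le> x \<Longrightarrow> 0 \<le> a x"
  using class_K_le[of a 0 x] class_K_zero[of a] by auto

lemma class_K_continuous: "class_K a \<Longrightarrow> continuous_on {0..} a"
  unfolding class_K_def by auto

lemma class_K_infD: "class_K_inf a \<Longrightarrow> class_K a"
  unfolding class_K_inf_def by auto

lemma class_K_inf_surj:
  assumes "class_K_inf a" "0 \<le> y"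
  shows "\<exists>x\<ge>0. a x = y"
proof -
  have K: "class_K a" using assms(1) by (rule class_K_infD)
  have "eventually (\<lambda>x. y \<le> a x) at_top"
    using assms(1) unfolding class_K_inf_def by (simp add: filterlim_at_top)
  then obtain X where X: "\<And>x. x \<ge> X \<Longrightarrow> y \<le> a x" by (auto simp: eventually_at_top_linorder)
  have "continuous_on {0..max X 0} a"
    using class_K_continuous[OF K] by (rule continuous_on_subset) auto
  then obtain x where "0 \<le> x" "a x = y"
    using IVT'[of a 0 y "max X 0"] X[of "max X 0"] class_K_zero[OF K] assms(2) by auto
  then show ?thesis by auto
qed

lemma continuous_on_right_inverse_class_K:
  assumes K: "class_K a" and g: "\<And>y. 0 \<le> y \<Longrightarrow> 0 \<le> g y \<and> a (g y) = y"
  shows "continuous_on {0..} g"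
  unfolding continuous_on_iff
proof (intro ballI allI impI)
  fix y e :: real assume y: "y \<in> {0..}" and e: "0 < e"
  define x where "x = g y"
  have x0: "0 \<le> x" and ax: "a x = y" using g[of y] y x_def by auto
  have above: "y < a (x + e)" using class_K_less[OF K x0, of "x + e"] e ax by auto
  have below: "a (x - e) < y" if "e \<le> x" using class_K_less[OF K, of "x - e" x] that e ax by auto
  define d where "d = (if e \<le> x then min (a (x + e) - y) (y - a (x - e)) else a (x + e) - y)"
  show "\<exists>d>0. \<forall>y'\<in>{0..}. dist y' y < d \<longrightarrow> dist (g y') (g y) < e"
  proof (intro exI conjI ballI impI)
    show "0 < d" unfolding d_def using above below by auto
    fix y' assume "y' \<in> {0..}" and close: "dist y' y < d"
    then have y': "0 \<le> g y'" "a (g y') = y'" using g by auto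
    have "y' < a (x + e)" using close unfolding d_def dist_real_def by (auto split: if_splits)
    then have "g y' < x + e"
      using y' class_K_le_iff[OF K, of "x + e" "g y'"] e x0 by auto
    moreover have "x - e < g y'"
    proof (cases "e \<le> x")
      case True
      then have "a (x - e) < y'" using close unfolding d_def dist_real_def by auto
      then show ?thesis using y' class_K_le_iff[OF K, of "g y'" "x - e"] True by auto
    qed (use y' in auto)
    ultimately show "dist (g y') (g y) < e" unfolding dist_real_def x_def[symmetric] by auto
  qed
qed

lemma class_K_inf_inverse:
  assumes "class_K_inf a"
  obtains g where "class_K g" "\<And>x. 0 \<le> x \<Longrightarrow> g (a x) = x"
proof
  have K: "class_K a" using assms by (rule class_K_infD)
  define g where "g y = (SOME x. 0 \<le> x \<and> a x = y)" for y
  have g: "0 \<le> g y \<and> a (g y) = y" if "0 \<le> y" for y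
    unfolding g_def using class_K_inf_surj[OF assms that] by (rule someI_ex)
  show left_inverse: "g (a x) = x" if x: "0 \<le> x" for x
  proof -
    have "0 \<le> g (a x)" "a (g (a x)) = a x" using g class_K_nonneg[OF K x] by auto
    then show ?thesis using class_K_le_iff[OF K, of "g (a x)" x] class_K_le_iff[OF K, of x "g (a x)"] x
      by auto
  qed
  have "strict_mono_on {0..} g"
  proof (rule strict_mono_onI)
    fix y y' :: real assume y: "y \<in> {0..}" "y' \<in> {0..}" "y < y'"
    show "g y < g y'"
    proof (rule ccontr)
      assume "\<not> g y < g y'"
      then have "a (g y') \<le> a (g y)" using g[of y'] y by (intro class_K_le[OF K]) auto
      then show False using g[of y] g[of y'] y by auto
    qed
  qed
  then show "class_K g" unfolding class_K_def
    using continuous_on_right_inverse_class_K[OF K g] left_inverse[of 0] class_K_zero[OF K] by auto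
qed

lemma class_KL_exp_decay:
  assumes g: "class_K g" and a: "class_K a" and lam: "0 < lam"
  shows "class_KL (\<lambda>r t. g (exp (- (lam * t)) * a r))"
proof -
  have "class_K (\<lambda>r. g (exp (- (lam * t)) * a r))" for t
  proof -
    have "continuous_on {0..} (\<lambda>r. exp (- (lam * t)) * a r)"
      by (intro continuous_on_mult continuous_on_const class_K_continuous[OF a])
    moreover have "(\<lambda>r. exp (- (lam * t)) * a r) ` {0..} \<subseteq> {0..}"
    proof
      fix y assume "y \<in> (\<lambda>r. exp (- (lam * t)) * a r) ` {0..}"
      then show "y \<in> {0..}" using class_K_nonneg[OF a] by fastforce
    qed
    ultimately have "continuous_on {0..} (\<lambda>r. g (exp (- (lam * t)) * a r))"
      by (rule continuous_on_compose2[OF class_K_continuous[OF g]])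
    moreover have "strict_mono_on {0..} (\<lambda>r. g (exp (- (lam * t)) * a r))"
    proof (rule strict_mono_onI)
      fix r s :: real assume rs: "r \<in> {0..}" "s \<in> {0..}" "r < s"
      then have "a r < a s" "0 \<le> a r" using class_K_less[OF a] class_K_nonneg[OF a] by auto
      then show "g (exp (- (lam * t)) * a r) < g (exp (- (lam * t)) * a s)"
        by (intro class_K_less[OF g]) auto
    qed
    ultimately show ?thesis
      unfolding class_K_def using class_K_zero[OF a] class_K_zero[OF g] by simp
  qed
  moreover have "antimono_on {0..} (\<lambda>t. g (exp (- (lam * t)) * a r))" if "0 \<le> r" for r
  proof (rule monotone_onI)
    fix t t' :: real assume "t \<in> {0..}" "t' \<in> {0..}" "t \<le> t'"
    then have "exp (- (lam * t')) * a r \<le> exp (- (lam * t)) * a r"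
      using lam class_K_nonneg[OF a that] by (intro mult_right_mono) (auto simp: mult_left_mono)
    then show "g (exp (- (lam * t')) * a r) \<le> g (exp (- (lam * t)) * a r)"
      using class_K_nonneg[OF a that] by (intro class_K_le[OF g]) auto
  qed
  moreover have "((\<lambda>t. g (exp (- (lam * t)) * a r)) \<longlongrightarrow> 0) at_top" if "0 \<le> r" for r
  proof -
    have "((\<lambda>t. exp (- (lam * t))) \<longlongrightarrow> 0) at_top"
      using lam by (metis exp_at_bot filterlim_at_top_mirror filterlim_cmult_at_bot_at_top
          filterlim_compose filterlim_uminus_at_top filterlim_uminus_at_top_at_bot
          less_numeral_extra(3))
    then have "((\<lambda>t. exp (- (lam * t)) * a r) \<longlongrightarrow> 0 * a r) at_top"
      by (intro tendsto_mult tendsto_const)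
    then have "((\<lambda>t. g (exp (- (lam * t)) * a r)) \<longlongrightarrow> g 0) at_top"
      by (intro continuous_on_tendsto_compose[OF class_K_continuous[OF g]])
        (auto simp: class_K_nonneg[OF a that])
    then show ?thesis using class_K_zero[OF g] by simp
  qed
  ultimately show ?thesis unfolding class_KL_def by blast
qed

section \<open>From a graph-based Lyapunov function to a KL bound\<close>

lemma labeled_graph_edge: "labeled_graph K E \<Longrightarrow> (j, l, i) \<in> E \<Longrightarrow> j < K \<and> l < K"
  unfolding labeled_graph_def by fast

lemma contraction_along_walk:
  fixes W :: "'x \<Rightarrow> nat \<Rightarrow> real"
  assumes contract: "\<And>x j l i. (j, l, i) \<in> E \<Longrightarrow> W (ft x i) l \<le> \<gamma> * W x j"
    and "0 \<le> \<gamma>" and walk: "\<And>k. (s k, s (k + 1), z k) \<in> E"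
  shows "W (sw_sol ft n x0 z) (s (int n)) \<le> \<gamma> ^ n * W x0 (s 0)"
proof (induction n)
  case (Suc n)
  have "W (sw_sol ft (Suc n) x0 z) (s (int (Suc n)))
      = W (ft (sw_sol ft n x0 z) (z (int n))) (s (int n + 1))"
    by (simp add: add.commute)
  also have "\<dots> \<le> \<gamma> * W (sw_sol ft n x0 z) (s (int n))"
    using contract walk by blast
  also have "\<dots> \<le> \<gamma> * (\<gamma> ^ n * W x0 (s 0))"
    using Suc.IH \<open>0 \<le> \<gamma>\<close> by (rule mult_left_mono)
  finally show ?case by simp
qed simp

lemma graph_lyapunov_imp_GUAS:
  fixes ft :: "'x::real_normed_vector \<Rightarrow> 'a \<Rightarrow> 'x"
  assumes graph: "labeled_graph K E" and "graph_lyapunov_sw ft K E W"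
  shows "GUAS_sw ft (walk_labels E)"
proof -
  obtain \<alpha>1 \<alpha>2 \<gamma> where A1: "class_K_inf \<alpha>1" and A2: "class_K_inf \<alpha>2" and "0 \<le> \<gamma>" "\<gamma> < 1"
    and sandwich: "\<And>x j. j < K \<Longrightarrow> \<alpha>1 (norm x) \<le> W x j \<and> W x j \<le> \<alpha>2 (norm x)"
    and contract: "\<And>x j l i. (j, l, i) \<in> E \<Longrightarrow> W (ft x i) l \<le> \<gamma> * W x j"
    using assms(2) unfolding graph_lyapunov_sw_def by fast
  have K1: "class_K \<alpha>1" and K2: "class_K \<alpha>2" using A1 A2 by (auto intro: class_K_infD)
  obtain g where Kg: "class_K g" and g: "\<And>x. 0 \<le> x \<Longrightarrow> g (\<alpha>1 x) = x"
    using class_K_inf_inverse[OF A1] by blast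
  define c where "c = max \<gamma> (1/2)" \<comment> \<open>keeps ln c defined when \<gamma> = 0\<close>
  have "0 < c" "c < 1" "\<gamma> \<le> c" using \<open>\<gamma> < 1\<close> unfolding c_def by auto
  define \<beta> where "\<beta> r t = g (exp (- (- ln c * t)) * \<alpha>2 r)" for r t
  have "class_KL \<beta>"
    unfolding \<beta>_def using \<open>0 < c\<close> \<open>c < 1\<close> by (intro class_KL_exp_decay Kg K2) simp
  moreover have "norm (sw_sol ft k x0 z) \<le> \<beta> (norm x0) (real k)" if z: "z \<in> walk_labels E" for k x0 z
  proof -
    obtain s where walk: "\<And>k. (s k, s (k + 1), z k) \<in> E"
      using z unfolding walk_labels_def by blast
    have nodes: "s k < K" for k using labeled_graph_edge[OF graph walk] by blast
    have "\<alpha>1 (norm (sw_sol ft k x0 z)) \<le> W (sw_sol ft k x0 z) (s (int k))"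
      using sandwich nodes by blast
    also have "\<dots> \<le> \<gamma> ^ k * W x0 (s 0)"
      using contract \<open>0 \<le> \<gamma>\<close> walk by (rule contraction_along_walk)
    also have "\<dots> \<le> c ^ k * \<alpha>2 (norm x0)"
      using sandwich[of "s 0" x0] nodes \<open>0 \<le> \<gamma>\<close> \<open>\<gamma> \<le> c\<close> class_K_nonneg[OF K2, of "norm x0"]
        class_K_nonneg[OF K1, of "norm x0"]
      by (intro mult_mono power_mono) auto
    also have "c ^ k = exp (- (- ln c * real k))"
      using \<open>0 < c\<close> by (simp add: exp_of_nat_mult mult.commute)
    finally have "\<alpha>1 (norm (sw_sol ft k x0 z)) \<le> exp (- (- ln c * real k)) * \<alpha>2 (norm x0)" .
    then have "g (\<alpha>1 (norm (sw_sol ft k x0 z))) \<le> \<beta> (norm x0) (real k)"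
      unfolding \<beta>_def by (rule class_K_le[OF Kg class_K_nonneg[OF K1 norm_ge_zero]])
    then show ?thesis using g by simp
  qed
  ultimately show ?thesis unfolding GUAS_sw_def by blast
qed

section \<open>Continuous minorants and majorants\<close>

definition lipschitz_minorant :: "(real \<Rightarrow> real) \<Rightarrow> real \<Rightarrow> real" where
  "lipschitz_minorant f s = (INF t\<in>{0..}. f t + \<bar>s - t\<bar>)"

context
  fixes f :: "real \<Rightarrow> real"
  assumes nonneg: "\<forall>t\<ge>0. 0 \<le> f t"
begin

lemma lipschitz_minorant_le:
  assumes "0 \<le> t"
  shows "lipschitz_minorant f s \<le> f t + \<bar>s - t\<bar>"
proof -
  have "bdd_below ((\<lambda>t. f t + \<bar>s - t\<bar>) ` {0..})"
    by (rule bdd_belowI2[where m=0]) (simp add: nonneg add_nonneg_nonneg)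
  then show ?thesis unfolding lipschitz_minorant_def by (rule cINF_lower) (use assms in auto)
qed

lemma lipschitz_minorant_greatest:
  "(\<And>t. 0 \<le> t \<Longrightarrow> c \<le> f t + \<bar>s - t\<bar>) \<Longrightarrow> c \<le> lipschitz_minorant f s"
  unfolding lipschitz_minorant_def by (rule cINF_greatest) auto

lemma lipschitz_minorant_nonneg: "0 \<le> lipschitz_minorant f s"
  by (rule lipschitz_minorant_greatest) (simp add: nonneg add_nonneg_nonneg)

lemma lipschitz_minorant_le_self: "0 \<le> s \<Longrightarrow> lipschitz_minorant f s \<le> f s"
  using lipschitz_minorant_le[of s s] by simp

lemma lipschitz_minorant_lipschitz:
  "lipschitz_minorant f s \<le> lipschitz_minorant f s' + \<bar>s - s'\<bar>"
proof -
  have "lipschitz_minorant f s - \<bar>s - s'\<bar> \<le> lipschitz_minorant f s'"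
  proof (rule lipschitz_minorant_greatest)
    fix t :: real assume "0 \<le> t"
    then have "lipschitz_minorant f s \<le> f t + \<bar>s - t\<bar>" by (rule lipschitz_minorant_le)
    then show "lipschitz_minorant f s - \<bar>s - s'\<bar> \<le> f t + \<bar>s' - t\<bar>" by linarith
  qed
  then show ?thesis by simp
qed

lemma continuous_on_lipschitz_minorant: "continuous_on A (lipschitz_minorant f)"
  unfolding continuous_on_iff
proof (intro ballI allI impI exI conjI)
  fix x x' e :: real assume "0 < e" "dist x' x < e"
  moreover note lipschitz_minorant_lipschitz[of x x'] lipschitz_minorant_lipschitz[of x' x]
  ultimately show "dist (lipschitz_minorant f x') (lipschitz_minorant f x) < e"
    unfolding dist_real_def by linarith
qed

context
  assumes mono: "mono_on {0..} f"
begin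

lemma lipschitz_minorant_mono:
  assumes "0 \<le> s" "s \<le> s'"
  shows "lipschitz_minorant f s \<le> lipschitz_minorant f s'"
proof (rule lipschitz_minorant_greatest)
  fix t :: real assume t: "0 \<le> t"
  show "lipschitz_minorant f s \<le> f t + \<bar>s' - t\<bar>"
  proof (cases "t \<le> s")
    case True
    then show ?thesis using lipschitz_minorant_le[OF t, of s] assms by linarith
  next
    case False
    then have "f s \<le> f t" using assms by (intro mono_onD[OF mono]) auto
    then show ?thesis using lipschitz_minorant_le_self[of s] assms by linarith
  qed
qed

lemma lipschitz_minorant_lower_bound:
  assumes "0 \<le> s"
  shows "min (f (s / 2)) (s / 2) \<le> lipschitz_minorant f s"
proof (rule lipschitz_minorant_greatest)
  fix t :: real assume t: "0 \<le> t"
  show "min (f (s / 2)) (s / 2) \<le> f t + \<bar>s - t\<bar>"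
  proof (cases "s / 2 \<le> t")
    case True
    then have "f (s / 2) \<le> f t" using assms by (intro mono_onD[OF mono]) auto
    then show ?thesis by linarith
  qed (use nonneg t in fastforce)
qed

lemma lipschitz_minorant_linear_growth:
  assumes linear: "\<And>s. 1 \<le> s \<Longrightarrow> c * s \<le> f s" and "2 \<le> s"
  shows "min c 1 * (s / 2) \<le> lipschitz_minorant f s"
proof -
  have "min c 1 * (s / 2) \<le> c * (s / 2)" by (rule mult_right_mono) (use assms in auto)
  also have "\<dots> \<le> f (s / 2)" by (rule linear) (use assms in simp)
  finally have "min c 1 * (s / 2) \<le> f (s / 2)" .
  moreover have "min c 1 * (s / 2) \<le> 1 * (s / 2)" by (rule mult_right_mono) (use assms in auto)
  ultimately have "min c 1 * (s / 2) \<le> min (f (s / 2)) (s / 2)" by simp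
  also have "\<dots> \<le> lipschitz_minorant f s" using assms by (intro lipschitz_minorant_lower_bound) auto
  finally show ?thesis .
qed

end

end

text \<open>Passing to the Lipschitz minorant removes the jumps of f; the factor s / (1 + s) then makes
  it strictly increasing without destroying its linear growth.\<close>

lemma class_K_inf_minorant:
  fixes f :: "real \<Rightarrow> real"
  assumes nonneg: "\<forall>s\<ge>0. 0 \<le> f s" and pos: "\<And>s. 0 < s \<Longrightarrow> 0 < f s"
    and mono: "mono_on {0..} f" and linear: "0 < c" "\<And>s. 1 \<le> s \<Longrightarrow> c * s \<le> f s"
  obtains \<alpha> where "class_K_inf \<alpha>" "\<And>s. 0 \<le> s \<Longrightarrow> \<alpha> s \<le> f s"
proof
  define g where "g = lipschitz_minorant f"
  have g_nonneg: "0 \<le> g s" for s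
    unfolding g_def by (rule lipschitz_minorant_nonneg[OF nonneg])
  have g_pos: "0 < g s" if "0 < s" for s
    using lipschitz_minorant_lower_bound[OF nonneg mono, of s] pos[of "s / 2"] that
    unfolding g_def by linarith
  define \<alpha> where "\<alpha> s = g s * s / (1 + s)" for s
  show "\<alpha> s \<le> f s" if "0 \<le> s" for s
  proof -
    have "\<alpha> s = g s * (s / (1 + s))" unfolding \<alpha>_def by simp
    also have "\<dots> \<le> g s" using that g_nonneg[of s] by (intro mult_left_le) auto
    also have "\<dots> \<le> f s" unfolding g_def using that by (rule lipschitz_minorant_le_self[OF nonneg])
    finally show ?thesis .
  qed
  have "continuous_on {0..} \<alpha>"
    unfolding \<alpha>_def g_def
    by (intro continuous_on_divide continuous_on_mult continuous_on_lipschitz_minorant[OF nonneg]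
        continuous_on_add continuous_on_const continuous_on_id) auto
  moreover have "strict_mono_on {0..} \<alpha>"
  proof (rule strict_mono_onI)
    fix s s' :: real assume ss: "s \<in> {0..}" "s' \<in> {0..}" "s < s'"
    have "g s \<le> g s'" using ss unfolding g_def by (intro lipschitz_minorant_mono[OF nonneg mono]) auto
    then have "g s * (s / (1 + s)) \<le> g s' * (s / (1 + s))" using ss by (intro mult_right_mono) auto
    also have "\<dots> < g s' * (s' / (1 + s'))"
      using ss g_pos[of s'] by (intro mult_strict_left_mono) (auto simp: field_simps)
    finally show "\<alpha> s < \<alpha> s'" unfolding \<alpha>_def by simp
  qed
  moreover have "filterlim \<alpha> at_top at_top"
  proof (rule filterlim_at_top_mono)
    show "filterlim (\<lambda>s. min c 1 / 4 * s) at_top at_top"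
      using linear(1) by (intro filterlim_tendsto_pos_mult_at_top[OF tendsto_const _ filterlim_ident]) auto
    have "min c 1 / 4 * s \<le> \<alpha> s" if s: "2 \<le> s" for s
    proof -
      have "min c 1 * (s / 2) * (1 / 2) \<le> g s * (s / (1 + s))"
        using lipschitz_minorant_linear_growth[OF nonneg mono linear(2) s] s g_nonneg[of s] linear(1)
        unfolding g_def by (intro mult_mono) (auto simp: field_simps)
      then show ?thesis unfolding \<alpha>_def by simp
    qed
    then show "eventually (\<lambda>s. min c 1 / 4 * s \<le> \<alpha> s) at_top"
      unfolding eventually_at_top_linorder by blast
  qed
  ultimately show "class_K_inf \<alpha>"
    unfolding class_K_inf_def class_K_def \<alpha>_def by simp
qed

definition cutoff :: "real \<Rightarrow> real" where
  "cutoff u = max 0 (min 1 (1 - u))"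

definition sliding_sup :: "(real \<Rightarrow> real) \<Rightarrow> real \<Rightarrow> real" where
  "sliding_sup D s = (SUP t\<in>{0..}. D t * cutoff (t - s))"

context
  fixes D :: "real \<Rightarrow> real"
  assumes nonneg: "\<forall>t\<ge>0. 0 \<le> D t" and mono: "mono_on {0..} D"
begin

lemma sliding_sup_term_le:
  assumes "0 \<le> s" "0 \<le> t"
  shows "D t * cutoff (t - s) \<le> D (s + 1)"
proof (cases "t \<le> s + 1")
  case True
  have "D t * cutoff (t - s) \<le> D t * 1"
    using nonneg assms by (intro mult_left_mono) (auto simp: cutoff_def)
  also have "\<dots> \<le> D (s + 1)" using True assms by (simp add: mono_onD[OF mono])
  finally show ?thesis .
next
  case False
  then show ?thesis using nonneg assms by (simp add: cutoff_def)
qed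

lemma sliding_sup_upper: "0 \<le> s \<Longrightarrow> 0 \<le> t \<Longrightarrow> D t * cutoff (t - s) \<le> sliding_sup D s"
  unfolding sliding_sup_def
  by (rule cSUP_upper) (auto intro!: bdd_aboveI2[where M="D (s + 1)"] sliding_sup_term_le)

lemma sliding_sup_least:
  "(\<And>t. 0 \<le> t \<Longrightarrow> D t * cutoff (t - s) \<le> c) \<Longrightarrow> sliding_sup D s \<le> c"
  unfolding sliding_sup_def by (rule cSUP_least) auto

lemma sliding_sup_ge: "0 \<le> s \<Longrightarrow> D s \<le> sliding_sup D s"
  using sliding_sup_upper[of s s] by (simp add: cutoff_def)

lemma sliding_sup_nonneg: "0 \<le> s \<Longrightarrow> 0 \<le> sliding_sup D s"
  using sliding_sup_ge nonneg order_trans by blast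

lemma sliding_sup_mono:
  assumes "0 \<le> s" "s \<le> s'"
  shows "sliding_sup D s \<le> sliding_sup D s'"
proof (rule sliding_sup_least)
  fix t :: real assume t: "0 \<le> t"
  have "D t * cutoff (t - s) \<le> D t * cutoff (t - s')"
    using assms nonneg t by (intro mult_left_mono) (auto simp: cutoff_def)
  also have "\<dots> \<le> sliding_sup D s'" using assms t by (intro sliding_sup_upper) auto
  finally show "D t * cutoff (t - s) \<le> sliding_sup D s'" .
qed

text \<open>The cutoff is 1-Lipschitz and vanishes beyond distance 1, so only D on [0, R + 1] enters
  the Lipschitz constant.\<close>

lemma sliding_sup_lipschitz:
  assumes "0 \<le> s" "0 \<le> s'" "s \<le> R" "s' \<le> R"
  shows "sliding_sup D s \<le> sliding_sup D s' + D (R + 1) * \<bar>s - s'\<bar>"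
proof (rule sliding_sup_least)
  fix t :: real assume t: "0 \<le> t"
  show "D t * cutoff (t - s) \<le> sliding_sup D s' + D (R + 1) * \<bar>s - s'\<bar>"
  proof (cases "t \<le> R + 1")
    case True
    have "cutoff (t - s) \<le> cutoff (t - s') + \<bar>s - s'\<bar>"
      unfolding cutoff_def by (simp add: max_def min_def abs_if)
    then have "D t * cutoff (t - s) \<le> D t * cutoff (t - s') + D t * \<bar>s - s'\<bar>"
      using nonneg t by (simp add: mult_left_mono flip: distrib_left)
    also have "\<dots> \<le> sliding_sup D s' + D (R + 1) * \<bar>s - s'\<bar>"
      using sliding_sup_upper[OF assms(2) t] mono_onD[OF mono, of t "R + 1"] True t
      by (intro add_mono mult_right_mono) auto
    finally show ?thesis .
  next
    case False
    then have "cutoff (t - s) = 0" using assms by (simp add: cutoff_def)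
    then show ?thesis using sliding_sup_nonneg[OF assms(2)] nonneg assms by simp
  qed
qed

lemma continuous_on_sliding_sup: "continuous_on {0..} (sliding_sup D)"
  unfolding continuous_on_iff
proof (intro ballI allI impI)
  fix x e :: real assume x: "x \<in> {0..}" and e: "0 < e"
  define L where "L = D (x + 2) + 1"
  have "0 < L" using nonneg x unfolding L_def by (simp add: add_nonneg_pos)
  show "\<exists>d>0. \<forall>x'\<in>{0..}. dist x' x < d \<longrightarrow> dist (sliding_sup D x') (sliding_sup D x) < e"
  proof (intro exI conjI ballI impI)
    show "0 < min 1 (e / L)" using e \<open>0 < L\<close> by simp
    fix x' assume x': "x' \<in> {0..}" and close: "dist x' x < min 1 (e / L)"
    then have "\<bar>x' - x\<bar> < 1" "\<bar>x' - x\<bar> < e / L" unfolding dist_real_def by auto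
    then have "D (x + 2) * \<bar>x' - x\<bar> < e"
      using \<open>0 < L\<close> unfolding L_def by (simp add: field_simps)
    moreover have "sliding_sup D x' \<le> sliding_sup D x + D (x + 1 + 1) * \<bar>x' - x\<bar>"
      "sliding_sup D x \<le> sliding_sup D x' + D (x + 1 + 1) * \<bar>x - x'\<bar>"
      using x x' \<open>\<bar>x' - x\<bar> < 1\<close> by (intro sliding_sup_lipschitz; simp)+
    ultimately show "dist (sliding_sup D x') (sliding_sup D x) < e"
      unfolding dist_real_def by (simp add: abs_minus_commute add.assoc)
  qed
qed

end

lemma class_K_inf_majorant:
  fixes D :: "real \<Rightarrow> real"
  assumes c: "class_K c" and nonneg: "\<forall>s\<ge>0. 0 \<le> D s" and mono: "mono_on {0..} D"
    and near_zero: "\<And>s. 0 \<le> s \<Longrightarrow> s \<le> 1 \<Longrightarrow> D s \<le> c s"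
  obtains \<alpha> where "class_K_inf \<alpha>" "\<And>s. 0 \<le> s \<Longrightarrow> D s \<le> \<alpha> s"
proof
  define M where "M = sliding_sup D"
  have M_nonneg: "0 \<le> M s" if "0 \<le> s" for s
    unfolding M_def using that by (rule sliding_sup_nonneg[OF nonneg mono])
  define \<alpha> where "\<alpha> s = c s + s * M s + s" for s
  show "D s \<le> \<alpha> s" if s: "0 \<le> s" for s
  proof (cases "s \<le> 1")
    case True
    then show ?thesis using near_zero[OF s] mult_nonneg_nonneg[OF s M_nonneg[OF s]] s unfolding \<alpha>_def by simp
  next
    case False
    have "D s \<le> M s" unfolding M_def using s by (rule sliding_sup_ge[OF nonneg mono])
    also have "\<dots> \<le> s * M s" using False M_nonneg[OF s] by (simp add: mult_le_cancel_right1)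
    finally show ?thesis using class_K_nonneg[OF c s] s unfolding \<alpha>_def by simp
  qed
  have "continuous_on {0..} \<alpha>"
    unfolding \<alpha>_def M_def
    by (intro continuous_on_add continuous_on_mult continuous_on_id class_K_continuous[OF c]
        continuous_on_sliding_sup[OF nonneg mono])
  moreover have "strict_mono_on {0..} \<alpha>"
  proof (rule strict_mono_onI)
    fix s s' :: real assume ss: "s \<in> {0..}" "s' \<in> {0..}" "s < s'"
    have "c s < c s'" using ss by (intro class_K_less[OF c]) auto
    moreover have "s * M s \<le> s' * M s'"
      using ss M_nonneg sliding_sup_mono[OF nonneg mono, of s s'] unfolding M_def
      by (intro mult_mono) auto
    ultimately show "\<alpha> s < \<alpha> s'" unfolding \<alpha>_def using ss by simp
  qed
  moreover have "filterlim \<alpha> at_top at_top"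
  proof (rule filterlim_at_top_mono[OF filterlim_ident])
    show "eventually (\<lambda>s. s \<le> \<alpha> s) at_top"
      unfolding eventually_at_top_linorder \<alpha>_def
      using class_K_nonneg[OF c] M_nonneg by (intro exI[of _ 0]) auto
  qed
  ultimately show "class_K_inf \<alpha>"
    unfolding class_K_inf_def class_K_def \<alpha>_def using class_K_zero[OF c] by simp
qed

section \<open>A discrete KL lemma\<close>

context
  fixes b :: "real \<Rightarrow> real \<Rightarrow> real"
  assumes KL: "class_KL b"
begin

lemma class_KL_class_K: "0 \<le> t \<Longrightarrow> class_K (\<lambda>r. b r t)"
  using KL unfolding class_KL_def by blast

lemma class_KL_nonneg: "0 \<le> r \<Longrightarrow> 0 \<le> t \<Longrightarrow> 0 \<le> b r t"
  using class_K_nonneg[OF class_KL_class_K] by blast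

lemma class_KL_mono: "0 \<le> r \<Longrightarrow> r \<le> r' \<Longrightarrow> 0 \<le> t \<Longrightarrow> b r t \<le> b r' t"
  using class_K_le[OF class_KL_class_K] by blast

lemma class_KL_antimono: "0 \<le> r \<Longrightarrow> 0 \<le> t \<Longrightarrow> t \<le> t' \<Longrightarrow> b r t' \<le> b r t"
  using KL unfolding class_KL_def monotone_on_def by auto

lemma class_KL_eventually_less: "0 \<le> r \<Longrightarrow> 0 < s \<Longrightarrow> \<exists>k::nat. b r (real k) < s"
proof -
  assume "0 \<le> r" "0 < s"
  then have "eventually (\<lambda>t. b r t < s) at_top"
    using KL order_tendstoD(2) unfolding class_KL_def by blast
  then obtain T where "\<And>t. t \<ge> T \<Longrightarrow> b r t < s" by (auto simp: eventually_at_top_linorder)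
  moreover have "real (nat \<lceil>T\<rceil>) \<ge> T" by linarith
  ultimately show ?thesis by blast
qed

end

definition settling_time :: "(real \<Rightarrow> real \<Rightarrow> real) \<Rightarrow> real \<Rightarrow> real \<Rightarrow> nat" where
  "settling_time b r s = (LEAST k. b r (real k) < s)"

text \<open>The radius 1 / s + 1 grows as the level s tends to 0, so for every radius r the halving
  exponent eventually exceeds the settling time of the r-ball; this keeps
  2^k * settling_weight b (b r k) bounded in k. At s = 0 the factor s makes the weight 0,
  whatever the junk value 1 / 0 = 0 does to the exponent.\<close>

definition settling_weight :: "(real \<Rightarrow> real \<Rightarrow> real) \<Rightarrow> real \<Rightarrow> real" where
  "settling_weight b s = s * (1 / 2) ^ settling_time b (1 / s + 1) s"

lemma settling_weight_nonneg: "0 \<le> s \<Longrightarrow> 0 \<le> settling_weight b s"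
  unfolding settling_weight_def by simp

lemma settling_weight_pos: "0 < s \<Longrightarrow> 0 < settling_weight b s"
  unfolding settling_weight_def by simp

lemma settling_weight_le: "0 \<le> s \<Longrightarrow> settling_weight b s \<le> s"
  unfolding settling_weight_def by (simp add: mult_left_le power_le_one)

context
  fixes b :: "real \<Rightarrow> real \<Rightarrow> real"
  assumes KL: "class_KL b"
begin

lemma settling_time_less: "0 \<le> r \<Longrightarrow> 0 < s \<Longrightarrow> b r (real (settling_time b r s)) < s"
  unfolding settling_time_def using class_KL_eventually_less[OF KL] by (rule LeastI_ex)

lemma settling_time_gt:
  assumes "0 \<le> r" "0 < s" "s \<le> b r (real k)"
  shows "k < settling_time b r s"
proof (rule ccontr)
  assume "\<not> k < settling_time b r s"
  then have "b r (real k) \<le> b r (real (settling_time b r s))"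
    using assms by (intro class_KL_antimono[OF KL]) auto
  then show False using settling_time_less[OF assms(1,2)] assms(3) by simp
qed

lemma settling_time_antimono:
  "0 \<le> r \<Longrightarrow> 0 < s \<Longrightarrow> s \<le> s' \<Longrightarrow> settling_time b r s' \<le> settling_time b r s"
  unfolding settling_time_def[of b r s'] using settling_time_less[of r s]
  by (intro Least_le) simp

lemma settling_time_mono:
  assumes "0 \<le> r" "r \<le> r'" "0 < s"
  shows "settling_time b r s \<le> settling_time b r' s"
proof -
  have "b r (real (settling_time b r' s)) \<le> b r' (real (settling_time b r' s))"
    using assms by (intro class_KL_mono[OF KL]) auto
  then show ?thesis
    unfolding settling_time_def[of b r s] using settling_time_less[of r' s] assms
    by (intro Least_le) simp
qed

lemma settling_weight_mono: "mono_on {0..} (settling_weight b)"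
proof (rule mono_onI)
  fix s s' :: real assume s: "s \<in> {0..}" "s' \<in> {0..}" "s \<le> s'"
  show "settling_weight b s \<le> settling_weight b s'"
  proof (cases "s = 0")
    case False
    then have "0 < s" using s by simp
    then have "settling_time b (1 / s' + 1) s' \<le> settling_time b (1 / s + 1) s'"
      using s by (intro settling_time_mono) (auto simp: divide_left_mono)
    also have "\<dots> \<le> settling_time b (1 / s + 1) s"
      using \<open>0 < s\<close> s by (intro settling_time_antimono) auto
    finally have "(1 / 2 :: real) ^ settling_time b (1 / s + 1) s
        \<le> (1 / 2) ^ settling_time b (1 / s' + 1) s'"
      by (intro power_decreasing) auto
    then show ?thesis unfolding settling_weight_def using s by (intro mult_mono) auto
  qed (use s settling_weight_nonneg in \<open>simp add: settling_weight_def\<close>)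
qed

lemma settling_weight_linear:
  assumes "1 \<le> s"
  shows "(1 / 2) ^ settling_time b 2 1 * s \<le> settling_weight b s"
proof -
  have "settling_time b (1 / s + 1) s \<le> settling_time b 2 s"
    using assms by (intro settling_time_mono) auto
  also have "\<dots> \<le> settling_time b 2 1" using assms by (intro settling_time_antimono) auto
  finally have "(1 / 2 :: real) ^ settling_time b 2 1 \<le> (1 / 2) ^ settling_time b (1 / s + 1) s"
    by (intro power_decreasing) auto
  then show ?thesis unfolding settling_weight_def using assms by (simp add: mult.commute)
qed

lemma two_power_settling_weight_le:
  assumes "0 \<le> r" and pos: "0 < b r (real k)" and radius: "r \<le> 1 / b r (real k) + 1"
  shows "2 ^ k * settling_weight b (b r (real k)) \<le> b r (real k)"
proof -
  define s where "s = b r (real k)"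
  have "s \<le> b (1 / s + 1) (real k)"
    unfolding s_def using assms by (intro class_KL_mono[OF KL]) auto
  then have "k \<le> settling_time b (1 / s + 1) s"
    using pos unfolding s_def by (intro less_imp_le[OF settling_time_gt]) auto
  then have "(1 / 2 :: real) ^ settling_time b (1 / s + 1) s \<le> (1 / 2) ^ k"
    by (intro power_decreasing) auto
  then have "(2 :: real) ^ k * (1 / 2) ^ settling_time b (1 / s + 1) s \<le> 1"
    using mult_left_mono[of _ _ "2 ^ k :: real"] by (fastforce simp: power_one_over)
  then show ?thesis
    using pos mult_left_mono[of _ 1 s] unfolding s_def[symmetric] settling_weight_def
    by (simp add: mult.left_commute)
qed

lemma two_power_settling_weight_bounded:
  assumes "0 \<le> r"
  shows "2 ^ k * settling_weight b (b r (real k))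
    \<le> 2 ^ settling_time b (r + 1) (1 / (r + 1)) * b r 0"
proof -
  define s where "s = b r (real k)"
  have "0 \<le> s" "s \<le> b r 0" "0 \<le> b r 0"
    unfolding s_def using assms by (auto intro: class_KL_nonneg[OF KL] class_KL_antimono[OF KL])
  consider "s = 0" | "0 < s" "r \<le> 1 / s + 1" | "0 < s" "1 / s + 1 < r"
    using \<open>0 \<le> s\<close> by force
  then show ?thesis
  proof cases
    case 1
    then show ?thesis using \<open>0 \<le> b r 0\<close> unfolding s_def settling_weight_def by simp
  next
    case 2
    then have "2 ^ k * settling_weight b s \<le> b r 0"
      using two_power_settling_weight_le[OF assms] \<open>s \<le> b r 0\<close> unfolding s_def by fastforce
    then show ?thesis using \<open>0 \<le> b r 0\<close> unfolding s_def
      by (smt (verit) mult_le_cancel_right1 one_le_power)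
  next
    case 3
    then have "1 < s * (r + 1)" by (simp add: field_simps)
    then have "1 / (r + 1) < s" using assms by (simp add: field_simps)
    also have "s \<le> b (r + 1) (real k)" unfolding s_def using assms by (intro class_KL_mono[OF KL]) auto
    finally have "k < settling_time b (r + 1) (1 / (r + 1))"
      using assms by (intro settling_time_gt) auto
    then have "(2 :: real) ^ k \<le> 2 ^ settling_time b (r + 1) (1 / (r + 1))"
      by (intro power_increasing) auto
    moreover have "settling_weight b s \<le> b r 0"
      using settling_weight_le[of s b] \<open>0 \<le> s\<close> \<open>s \<le> b r 0\<close> by linarith
    ultimately show ?thesis
      using settling_weight_nonneg[of s b] \<open>0 \<le> s\<close> unfolding s_def by (intro mult_mono) auto
  qed
qed

lemma two_power_settling_weight_near_zero:
  assumes "0 \<le> r" "r \<le> 1"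
  shows "2 ^ k * settling_weight b (b r (real k)) \<le> b r 0"
proof (cases "b r (real k) = 0")
  case False
  then have "0 < b r (real k)" using assms class_KL_nonneg[OF KL, of r "real k"] by simp
  moreover have "r \<le> 1 / b r (real k) + 1"
    using assms \<open>0 < b r (real k)\<close> by (smt (verit) divide_nonneg_pos)
  ultimately have "2 ^ k * settling_weight b (b r (real k)) \<le> b r (real k)"
    by (rule two_power_settling_weight_le[OF assms(1)])
  also have "\<dots> \<le> b r 0" using assms by (intro class_KL_antimono[OF KL]) auto
  finally show ?thesis .
qed (use assms class_KL_nonneg[OF KL] in \<open>simp add: settling_weight_def\<close>)

end

definition weighted_sup :: "(real \<Rightarrow> real) \<Rightarrow> (real \<Rightarrow> real \<Rightarrow> real) \<Rightarrow> real \<Rightarrow> real" where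
  "weighted_sup \<alpha> b r = (SUP k. 2 ^ k * \<alpha> (b r (real k)))"

context
  fixes b :: "real \<Rightarrow> real \<Rightarrow> real" and \<alpha> :: "real \<Rightarrow> real"
  assumes KL: "class_KL b" and K: "class_K \<alpha>"
    and below: "\<And>s. 0 \<le> s \<Longrightarrow> \<alpha> s \<le> settling_weight b s"
begin

lemma two_power_le_settling_weight:
  "0 \<le> r \<Longrightarrow> 2 ^ k * \<alpha> (b r (real k)) \<le> 2 ^ k * settling_weight b (b r (real k))"
  using below class_KL_nonneg[OF KL] by simp

lemma weighted_sup_upper:
  assumes "0 \<le> r"
  shows "2 ^ k * \<alpha> (b r (real k)) \<le> weighted_sup \<alpha> b r"
  unfolding weighted_sup_def
proof (rule cSUP_upper)
  show "bdd_above (range (\<lambda>k. 2 ^ k * \<alpha> (b r (real k))))"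
    using two_power_le_settling_weight[OF assms] two_power_settling_weight_bounded[OF KL assms]
    by (intro bdd_aboveI2) (rule order_trans)
qed simp

lemma weighted_sup_nonneg: "\<forall>r\<ge>0. 0 \<le> weighted_sup \<alpha> b r"
proof (intro allI impI)
  fix r :: real assume r: "0 \<le> r"
  have "0 \<le> 2 ^ 0 * \<alpha> (b r (real 0))"
    using class_K_nonneg[OF K class_KL_nonneg[OF KL r]] by simp
  also have "\<dots> \<le> weighted_sup \<alpha> b r" by (rule weighted_sup_upper[OF r])
  finally show "0 \<le> weighted_sup \<alpha> b r" .
qed

lemma weighted_sup_mono: "mono_on {0..} (weighted_sup \<alpha> b)"
proof (rule mono_onI)
  fix r r' :: real assume r: "r \<in> {0..}" "r' \<in> {0..}" "r \<le> r'"
  show "weighted_sup \<alpha> b r \<le> weighted_sup \<alpha> b r'"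
    unfolding weighted_sup_def[of \<alpha> b r]
  proof (rule cSUP_least)
    fix k
    have "\<alpha> (b r (real k)) \<le> \<alpha> (b r' (real k))"
      using r by (intro class_K_le[OF K] class_KL_nonneg[OF KL] class_KL_mono[OF KL]) auto
    then have "2 ^ k * \<alpha> (b r (real k)) \<le> 2 ^ k * \<alpha> (b r' (real k))" by simp
    also have "\<dots> \<le> weighted_sup \<alpha> b r'" using weighted_sup_upper r by simp
    finally show "2 ^ k * \<alpha> (b r (real k)) \<le> weighted_sup \<alpha> b r'" .
  qed simp
qed

lemma weighted_sup_near_zero: "0 \<le> r \<Longrightarrow> r \<le> 1 \<Longrightarrow> weighted_sup \<alpha> b r \<le> b r 0"
  unfolding weighted_sup_def
  using order_trans[OF two_power_le_settling_weight two_power_settling_weight_near_zero[OF KL]]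
  by (intro cSUP_least) auto

end

lemma class_KL_weighted_decay:
  assumes KL: "class_KL b"
  obtains \<alpha>1 \<alpha>2 where "class_K_inf \<alpha>1" "class_K_inf \<alpha>2"
    "\<And>r k. 0 \<le> r \<Longrightarrow> 2 ^ k * \<alpha>1 (b r (real k)) \<le> \<alpha>2 r"
proof -
  obtain \<alpha>1 where A1: "class_K_inf \<alpha>1" and below: "\<And>s. 0 \<le> s \<Longrightarrow> \<alpha>1 s \<le> settling_weight b s"
    using class_K_inf_minorant[of "settling_weight b" "(1 / 2) ^ settling_time b 2 1"]
      settling_weight_nonneg settling_weight_pos settling_weight_mono[OF KL]
      settling_weight_linear[OF KL]
    by (metis zero_less_divide_1_iff zero_less_numeral zero_less_power)
  note hyps = KL class_K_infD[OF A1] below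
  obtain \<alpha>2 where "class_K_inf \<alpha>2" "\<And>r. 0 \<le> r \<Longrightarrow> weighted_sup \<alpha>1 b r \<le> \<alpha>2 r"
    using class_K_inf_majorant[OF class_KL_class_K[OF KL order_refl] weighted_sup_nonneg[OF hyps]
        weighted_sup_mono[OF hyps] weighted_sup_near_zero[OF hyps]]
    by blast
  then show ?thesis using that[OF A1] weighted_sup_upper[OF hyps] order_trans by blast
qed

section \<open>From a KL bound to a graph-based Lyapunov function\<close>

definition forward_walk_labels :: "(nat \<times> nat \<times> 'a) set \<Rightarrow> nat \<Rightarrow> (int \<Rightarrow> 'a) set" where
  "forward_walk_labels E j =
     {z. \<exists>s::nat \<Rightarrow> nat. s 0 = j \<and> (\<forall>k. (s k, s (Suc k), z (int k)) \<in> E)}"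

lemma infinite_path_exists:
  assumes step: "\<forall>v<K. \<exists>u i. R v u i \<and> u < K" and "v < K"
  obtains s lab where "s 0 = v" "\<And>n. R (s n) (s (Suc n)) (lab n)" "\<And>n. s n < K"
proof -
  have "\<exists>p. \<forall>n. (fst (p n) < K \<and> (n = 0 \<longrightarrow> fst (p n) = v))
      \<and> R (fst (p n)) (fst (p (Suc n))) (snd (p (Suc n)))"
  proof (rule dependent_nat_choice)
    show "\<exists>q. fst q < K \<and> (0 = (0::nat) \<longrightarrow> fst q = v)" using \<open>v < K\<close> by auto
    fix q and n :: nat assume "fst q < K \<and> (n = 0 \<longrightarrow> fst q = v)"
    then obtain u i where "R (fst q) u i" "u < K" using step by blast
    then show "\<exists>q'. (fst q' < K \<and> (Suc n = 0 \<longrightarrow> fst q' = v)) \<and> R (fst q) (fst q') (snd q')"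
      by (intro exI[of _ "(u, i)"]) simp
  qed
  then obtain p where p: "\<forall>n. (fst (p n) < K \<and> (n = 0 \<longrightarrow> fst (p n) = v))
      \<and> R (fst (p n)) (fst (p (Suc n))) (snd (p (Suc n)))" by blast
  show ?thesis by (rule that[of "\<lambda>n. fst (p n)" "\<lambda>n. snd (p (Suc n))"]) (use p in auto)
qed

lemma labeled_graph_out: "labeled_graph K E \<Longrightarrow> \<forall>v<K. \<exists>u i. (v, u, i) \<in> E \<and> u < K"
  unfolding labeled_graph_def by fast

lemma labeled_graph_in: "labeled_graph K E \<Longrightarrow> \<forall>v<K. \<exists>u i. (u, v, i) \<in> E \<and> u < K"
  unfolding labeled_graph_def by fast

lemma forward_walk_labels_nonempty:
  assumes "labeled_graph K E" "j < K"
  obtains z where "z \<in> forward_walk_labels E j"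
proof -
  obtain s lab where "s 0 = j" "\<And>n. (s n, s (Suc n), lab n) \<in> E"
    using infinite_path_exists[OF labeled_graph_out[OF assms(1)] assms(2)] by metis
  then have "(\<lambda>k. lab (nat k)) \<in> forward_walk_labels E j"
    unfolding forward_walk_labels_def by auto
  then show ?thesis by (rule that)
qed

text \<open>Backwards, the walk is continued along incoming edges, which every node has.\<close>

lemma forward_walk_labels_extend:
  assumes "labeled_graph K E" "j < K" "z \<in> forward_walk_labels E j"
  obtains z' where "z' \<in> walk_labels E" "\<And>n::nat. z' (int n) = z (int n)"
proof -
  obtain s where s0: "s 0 = j" and s: "\<And>k. (s k, s (Suc k), z (int k)) \<in> E"
    using assms(3) unfolding forward_walk_labels_def by blast
  obtain p lab where p0: "p 0 = j" and p: "\<And>n. (p (Suc n), p n, lab n) \<in> E"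
    using infinite_path_exists[OF labeled_graph_in[OF assms(1)] assms(2)] by metis
  define S where "S k = (if 0 \<le> k then s (nat k) else p (nat (- k)))" for k :: int
  define z' where "z' k = (if 0 \<le> k then z k else lab (nat (- k) - 1))" for k :: int
  have "(S k, S (k + 1), z' k) \<in> E" for k
  proof (cases "0 \<le> k")
    case True
    then show ?thesis using s[of "nat k"] unfolding S_def z'_def by (simp add: nat_add_distrib)
  next
    case False
    define n where "n = nat (- k) - 1"
    have k: "k = - int (Suc n)" and nat_k: "nat (- k) = Suc n" unfolding n_def using False by simp_all
    have "S (k + 1) = p n"
      using p0 s0 unfolding S_def k by (cases n) (simp_all add: nat_add_distrib)
    moreover have "S k = p (Suc n)" "z' k = lab n" unfolding S_def z'_def using False nat_k by simp_all
    ultimately show ?thesis using p[of n] by simp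
  qed
  then have "z' \<in> walk_labels E" unfolding walk_labels_def by blast
  then show ?thesis by (rule that) (simp add: z'_def)
qed

lemma forward_walk_labels_prepend:
  assumes "(j, l, i) \<in> E" "z \<in> forward_walk_labels E l"
  shows "(\<lambda>n. if n = 0 then i else z (n - 1)) \<in> forward_walk_labels E j"
proof -
  obtain s where "s 0 = l" "\<And>k. (s k, s (Suc k), z (int k)) \<in> E"
    using assms(2) unfolding forward_walk_labels_def by blast
  then have "\<forall>k. (case_nat j s k, case_nat j s (Suc k), if int k = 0 then i else z (int k - 1)) \<in> E"
    using assms(1) by (auto split: nat.split simp: of_nat_diff)
  then show ?thesis unfolding forward_walk_labels_def
    by (intro CollectI exI[of _ "case_nat j s"]) simp
qed

lemma sw_sol_cong: "(\<And>n. n < k \<Longrightarrow> z (int n) = z' (int n)) \<Longrightarrow> sw_sol ft k x z = sw_sol ft k x z'"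
  by (induction k) auto

lemma sw_sol_prepend:
  "sw_sol ft (Suc k) x (\<lambda>n. if n = 0 then i else z (n - 1)) = sw_sol ft k (ft x i) z"
  by (induction k) auto

definition weighted_orbit_values ::
    "('x::real_normed_vector \<Rightarrow> 'a \<Rightarrow> 'x) \<Rightarrow> (nat \<times> nat \<times> 'a) set \<Rightarrow> (real \<Rightarrow> real)
      \<Rightarrow> 'x \<Rightarrow> nat \<Rightarrow> real set" where
  "weighted_orbit_values ft E \<alpha> x j =
     {2 ^ k * \<alpha> (norm (sw_sol ft k x z)) | k z. z \<in> forward_walk_labels E j}"

definition converse_lyapunov ::
    "('x::real_normed_vector \<Rightarrow> 'a \<Rightarrow> 'x) \<Rightarrow> (nat \<times> nat \<times> 'a) set \<Rightarrow> (real \<Rightarrow> real)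
      \<Rightarrow> 'x \<Rightarrow> nat \<Rightarrow> real" where
  "converse_lyapunov ft E \<alpha> x j = Sup (weighted_orbit_values ft E \<alpha> x j)"

context
  fixes ft :: "'x::real_normed_vector \<Rightarrow> 'a \<Rightarrow> 'x" and K E \<beta> \<alpha>1 \<alpha>2
  assumes graph: "labeled_graph K E"
    and bound: "\<And>k x0 z. z \<in> walk_labels E \<Longrightarrow> norm (sw_sol ft k x0 z) \<le> \<beta> (norm x0) (real k)"
    and K1: "class_K \<alpha>1"
    and weighted: "\<And>r k. 0 \<le> r \<Longrightarrow> 2 ^ k * \<alpha>1 (\<beta> r (real k)) \<le> \<alpha>2 r"
begin

lemma weighted_orbit_values_le:
  assumes "j < K" "y \<in> weighted_orbit_values ft E \<alpha>1 x j"
  shows "y \<le> \<alpha>2 (norm x)"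
proof -
  obtain k z where y: "y = 2 ^ k * \<alpha>1 (norm (sw_sol ft k x z))"
    and z: "z \<in> forward_walk_labels E j" using assms(2) unfolding weighted_orbit_values_def by blast
  obtain z' where z': "z' \<in> walk_labels E" and "\<And>n::nat. z' (int n) = z (int n)"
    using forward_walk_labels_extend[OF graph \<open>j < K\<close> z] by blast
  then have "sw_sol ft k x z = sw_sol ft k x z'" by (intro sw_sol_cong) simp
  then have "norm (sw_sol ft k x z) \<le> \<beta> (norm x) (real k)" using bound[OF z'] by simp
  then have "y \<le> 2 ^ k * \<alpha>1 (\<beta> (norm x) (real k))"
    unfolding y using class_K_le[OF K1] by simp
  also have "\<dots> \<le> \<alpha>2 (norm x)" by (rule weighted) simp
  finally show ?thesis .
qed

lemma weighted_orbit_values_nonempty: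
  assumes "j < K"
  shows "weighted_orbit_values ft E \<alpha>1 x j \<noteq> {}"
proof -
  obtain z where "z \<in> forward_walk_labels E j" using forward_walk_labels_nonempty[OF graph assms] .
  then show ?thesis unfolding weighted_orbit_values_def by blast
qed

lemma converse_lyapunov_upper:
  assumes "j < K" "y \<in> weighted_orbit_values ft E \<alpha>1 x j"
  shows "y \<le> converse_lyapunov ft E \<alpha>1 x j"
  unfolding converse_lyapunov_def using assms(2)
  by (rule cSup_upper) (use weighted_orbit_values_le[OF assms(1)] in \<open>rule bdd_aboveI\<close>)

lemma converse_lyapunov_bounds:
  assumes j: "j < K"
  shows "\<alpha>1 (norm x) \<le> converse_lyapunov ft E \<alpha>1 x j \<and> converse_lyapunov ft E \<alpha>1 x j \<le> \<alpha>2 (norm x)"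
proof
  obtain z where "z \<in> forward_walk_labels E j" using forward_walk_labels_nonempty[OF graph j] .
  then have "2 ^ 0 * \<alpha>1 (norm (sw_sol ft 0 x z)) \<in> weighted_orbit_values ft E \<alpha>1 x j"
    unfolding weighted_orbit_values_def by blast
  then show "\<alpha>1 (norm x) \<le> converse_lyapunov ft E \<alpha>1 x j"
    using converse_lyapunov_upper[OF j] by simp
  show "converse_lyapunov ft E \<alpha>1 x j \<le> \<alpha>2 (norm x)"
    unfolding converse_lyapunov_def
    using weighted_orbit_values_nonempty[OF j] weighted_orbit_values_le[OF j] by (rule cSup_least)
qed

lemma converse_lyapunov_contract:
  assumes edge: "(j, l, i) \<in> E"
  shows "converse_lyapunov ft E \<alpha>1 (ft x i) l \<le> 1 / 2 * converse_lyapunov ft E \<alpha>1 x j"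
proof -
  have "j < K" "l < K" using labeled_graph_edge[OF graph edge] by auto
  have "y \<le> 1 / 2 * converse_lyapunov ft E \<alpha>1 x j"
    if y_mem: "y \<in> weighted_orbit_values ft E \<alpha>1 (ft x i) l" for y
  proof -
    obtain k z where y: "y = 2 ^ k * \<alpha>1 (norm (sw_sol ft k (ft x i) z))"
      and z: "z \<in> forward_walk_labels E l"
      using y_mem unfolding weighted_orbit_values_def by blast
    have "2 ^ Suc k * \<alpha>1 (norm (sw_sol ft (Suc k) x (\<lambda>n. if n = 0 then i else z (n - 1))))
        \<in> weighted_orbit_values ft E \<alpha>1 x j"
      unfolding weighted_orbit_values_def using forward_walk_labels_prepend[OF edge z] by blast
    then have "2 * y \<le> converse_lyapunov ft E \<alpha>1 x j"
      using converse_lyapunov_upper[OF \<open>j < K\<close>] unfolding y sw_sol_prepend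
      by (simp add: mult.assoc)
    then show ?thesis by simp
  qed
  then show ?thesis
    unfolding converse_lyapunov_def[of ft E \<alpha>1 "ft x i"]
    using weighted_orbit_values_nonempty[OF \<open>l < K\<close>] by (intro cSup_least)
qed

end

lemma GUAS_imp_graph_lyapunov:
  fixes ft :: "'x::real_normed_vector \<Rightarrow> 'a \<Rightarrow> 'x"
  assumes graph: "labeled_graph K E" and "GUAS_sw ft (walk_labels E)"
  shows "\<exists>W. graph_lyapunov_sw ft K E W"
proof -
  obtain \<beta> where KL: "class_KL \<beta>"
    and bound: "\<And>k x0 z. z \<in> walk_labels E \<Longrightarrow> norm (sw_sol ft k x0 z) \<le> \<beta> (norm x0) (real k)"
    using assms(2) unfolding GUAS_sw_def by blast
  obtain \<alpha>1 \<alpha>2 where A1: "class_K_inf \<alpha>1" and A2: "class_K_inf \<alpha>2"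
    and weighted: "\<And>r k. 0 \<le> r \<Longrightarrow> 2 ^ k * \<alpha>1 (\<beta> r (real k)) \<le> \<alpha>2 r"
    using class_KL_weighted_decay[OF KL] by blast
  note hyps = graph bound class_K_infD[OF A1] weighted
  have "graph_lyapunov_sw ft K E (converse_lyapunov ft E \<alpha>1)"
    unfolding graph_lyapunov_sw_def
  proof (rule exI[of _ \<alpha>1], rule exI[of _ \<alpha>2], rule exI[of _ "1 / 2"], intro conjI)
    show "\<forall>x. \<forall>j<K. \<alpha>1 (norm x) \<le> converse_lyapunov ft E \<alpha>1 x j
        \<and> converse_lyapunov ft E \<alpha>1 x j \<le> \<alpha>2 (norm x)"
      using converse_lyapunov_bounds[OF hyps] by blast
    show "\<forall>x. \<forall>(j, l, i)\<in>E.
        converse_lyapunov ft E \<alpha>1 (ft x i) l \<le> 1 / 2 * converse_lyapunov ft E \<alpha>1 x j"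
      using converse_lyapunov_contract[OF hyps] by blast
  qed (use A1 A2 in auto)
  then show ?thesis by blast
qed

theorem mainTheorem6:
  fixes ft :: "real^'n \<Rightarrow> 'a::countable \<Rightarrow> real^'n"
    and K :: nat and E :: "(nat \<times> nat \<times> 'a) set" and Z :: "(int \<Rightarrow> 'a) set"
  assumes "labeled_graph K E"
    and "Z = walk_labels E"
  shows "GUAS_sw ft Z \<longleftrightarrow> (\<exists>W. graph_lyapunov_sw ft K E W)"
  using GUAS_imp_graph_lyapunov[OF assms(1)] graph_lyapunov_imp_GUAS[OF assms(1)] assms(2)
  by blast

end
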